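(* Let $\mathbb{G}$ be a Carnot group of step 2 equipped with a strongly homogeneous norm $\|\cdot\|$, and let $K:\mathbb{G}\setminus\{\mathbf0\}\to\mathbb{R}^d$ be a $(Q-1)$-dimensional Calderón–Zygmund kernel with parameters $\beta$ and $\kappa$. Then there exists $C\ge1$ depending on $\kappa$ and $\beta$ such that $$|K(q^{-1}\cdot p_1)-K(q^{-1}\cdot p_2)|+|K(p_1^{-1}\cdot q)-K(p_2^{-1}\cdot q)|\lesssim\frac{\|p_2^{-1}\cdot p_1\|^{\beta/2}}{\|q^{-1}\cdot p_1\|^{Q-1+\beta/2}}$$ for all $q\in\mathbb{G}$ and $p_1,p_2\in\mathbb{G}\setminus\{q\}$ with $d(p_1,p_2)\le d(p_1,q)/C$.
   Context: Step-2 Carnot group: $\mathbb{G}\cong\mathfrak v_1\oplus\mathfrak v_2\cong\mathbb{R}^N$ in exponential coordinates, $(x,z)\cdot(x',z')=(x+x',z+z'+\tfrac12[x,x'])$, $[\mathfrak v_1,\mathfrak v_1]=\mathfrak v_2$, $\delta_t(x,z)=(tx,t^2z)$, $Q=\dim\mathfrak v_1+2\dim\mathfrak v_2$. Strongly homogeneous norm: continuous, $\|\delta_tp\|=|t|\|p\|$ for $t\in\mathbb{R}$, $\|p\|=0$ iff $p=\mathbf0$; $d(p,q)=\|q^{-1}p\|$. $K$ continuous is a $(Q-1)$-dimensional Calderón–Zygmund kernel with parameters $\kappa\in(0,1)$, $\beta\in(0,1]$ if there is $C_K\ge1$ with $|K(p)|\le C_K\|p\|^{1-Q}$ for $p\ne\mathbf0$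 and $|K(p_1)-K(p_2)|\le C_K\|p_2^{-1}p_1\|^\beta/\|p_1\|^{Q-1+\beta}$ whenever $p_1,p_2\ne\mathbf0$, $d(p_1,p_2)\le\kappa\|p_1\|$. The implicit constant in $\lesssim$ is independent of $q,p_1,p_2$. *)

theory Defs
  imports "HOL-Analysis.Analysis"
begin

text \<open>Step-2 Carnot group in exponential coordinates: points are pairs (x,z) with
x in the first layer V1 = real^'m and z in the second layer V2 = real^'n; the Lie
bracket restricted to V1 is a skew-symmetric bilinear map B : V1 x V1 -> V2.\<close>

type_synonym ('m, 'n) cpt = "(real^'m) \<times> (real^'n)"

definition step2_bracket :: "(real^'m::finite \<Rightarrow> real^'m \<Rightarrow> real^'n::finite) \<Rightarrow> bool" where
  "step2_bracket B \<longleftrightarrow> bilinear B \<and> (\<forall>x y. B x y = - B y x)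
     \<and> span {B x y | x y. True} = UNIV"

definition gmul :: "(real^'m::finite \<Rightarrow> real^'m \<Rightarrow> real^'n::finite) \<Rightarrow> ('m,'n) cpt \<Rightarrow> ('m,'n) cpt \<Rightarrow> ('m,'n) cpt" where
  "gmul B p p' = (fst p + fst p', snd p + snd p' + (1/2) *\<^sub>R B (fst p) (fst p'))"

definition ginv :: "('m::finite,'n::finite) cpt \<Rightarrow> ('m,'n) cpt" where
  "ginv p = (- fst p, - snd p)"

definition dil :: "real \<Rightarrow> ('m::finite,'n::finite) cpt \<Rightarrow> ('m,'n) cpt" where
  "dil t p = (t *\<^sub>R fst p, (t^2) *\<^sub>R snd p)"

definition hdim :: "('m::finite,'n::finite) cpt itself \<Rightarrow> real" where
  "hdim _ = real CARD('m) + 2 * real CARD('n)"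

definition strongly_homogeneous_norm :: "(('m::finite,'n::finite) cpt \<Rightarrow> real) \<Rightarrow> bool" where
  "strongly_homogeneous_norm nrm \<longleftrightarrow> continuous_on UNIV nrm
     \<and> (\<forall>p. 0 \<le> nrm p)
     \<and> (\<forall>t p. nrm (dil t p) = \<bar>t\<bar> * nrm p)
     \<and> (\<forall>p. nrm p = 0 \<longleftrightarrow> p = 0)"

definition cdist :: "(real^'m::finite \<Rightarrow> real^'m \<Rightarrow> real^'n::finite) \<Rightarrow> (('m,'n) cpt \<Rightarrow> real)
    \<Rightarrow> ('m,'n) cpt \<Rightarrow> ('m,'n) cpt \<Rightarrow> real" where
  "cdist B nrm p q = nrm (gmul B (ginv q) p)"

definition CZ_kernel :: "(real^'m::finite \<Rightarrow> real^'m \<Rightarrow> real^'n::finite) \<Rightarrow> (('m,'n) cpt \<Rightarrow> real) \<Rightarrow> real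
    \<Rightarrow> real \<Rightarrow> real \<Rightarrow> (('m,'n) cpt \<Rightarrow> real^'d::finite) \<Rightarrow> bool" where
  "CZ_kernel B nrm Q \<kappa> \<beta> K \<longleftrightarrow>
     continuous_on (UNIV - {0}) K \<and> 0 < \<kappa> \<and> \<kappa> < 1 \<and> 0 < \<beta> \<and> \<beta> \<le> 1 \<and>
     (\<exists>CK\<ge>1.
        (\<forall>p. p \<noteq> 0 \<longrightarrow> norm (K p) \<le> CK * nrm p powr (1 - Q)) \<and>
        (\<forall>p1 p2. p1 \<noteq> 0 \<and> p2 \<noteq> 0 \<and> cdist B nrm p1 p2 \<le> \<kappa> * nrm p1 \<longrightarrow>
           norm (K p1 - K p2) \<le> CK * nrm (gmul B (ginv p2) p1) powr \<beta> / nrm p1 powr (Q - 1 + \<beta>)))"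

end

theory Submission
  imports Defs
begin

text \<open>
  Write \<open>P = q\<inverse> p1\<close>, \<open>u = p2\<inverse> p1\<close>, \<open>r = \<parallel>P\<parallel>\<close> and \<open>\<rho> = \<parallel>u\<parallel> \<le> r / C\<close>.
  Left translation preserves \<open>d\<close>, so the smoothness condition of \<open>K\<close> bounds the first
  difference by \<open>\<rho>\<^sup>\<beta> / r\<^bsup>Q-1+\<beta>\<^esup> \<le> \<rho>\<^bsup>\<beta>/2\<^esup> / r\<^bsup>Q-1+\<beta>/2\<^esup>\<close>.
  For the second one, \<open>(p2\<inverse> q)\<inverse> (p1\<inverse> q) = P u\<inverse> P\<inverse>\<close> and \<open>p1\<inverse> q = P\<inverse>\<close>.
  In step 2, conjugating \<open>u\<inverse>\<close> by \<open>P\<close> only adds \<open>B(u\<^sub>x, P\<^sub>x)\<close> to the vertical part,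
  so the conjugate has norm \<open>\<lesssim> \<surd>(\<rho> r)\<close>; once \<open>C\<close> is large this is \<open>\<le> \<kappa> \<parallel>P\<inverse>\<parallel>\<close>, and the
  smoothness condition gives \<open>(\<rho> r)\<^bsup>\<beta>/2\<^esup> / r\<^bsup>Q-1+\<beta>\<^esup>\<close>, the same bound up to a constant. All comparisons between
  the arbitrary strongly homogeneous norm and coordinates go through the explicit gauge
  \<open>(|x|\<^sup>4 + |z|\<^sup>2)\<^bsup>1/4\<^esup>\<close>, to which it is equivalent by compactness of the gauge sphere.
\<close>

definition koranyi_sq :: "('m::finite,'n::finite) cpt \<Rightarrow> real" where
  "koranyi_sq p = sqrt (norm (fst p) ^ 4 + norm (snd p) ^ 2)"

lemma koranyi_sq_nonneg: "0 \<le> koranyi_sq p"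
  by (simp add: koranyi_sq_def)

lemma norm_fst_sq_le_koranyi_sq: "norm (fst p) ^ 2 \<le> koranyi_sq p"
  unfolding koranyi_sq_def by (rule real_le_rsqrt) (simp flip: power_mult)

lemma norm_snd_le_koranyi_sq: "norm (snd p) \<le> koranyi_sq p"
  unfolding koranyi_sq_def by (rule real_le_rsqrt) simp

lemma koranyi_sq_eq_0_iff: "koranyi_sq p = 0 \<longleftrightarrow> p = 0"
  by (cases p) (auto simp: koranyi_sq_def add_nonneg_eq_0_iff zero_prod_def)

lemma koranyi_sq_dil: "koranyi_sq (dil t p) = t\<^sup>2 * koranyi_sq p"
proof -
  have "norm (fst (dil t p)) ^ 4 + norm (snd (dil t p)) ^ 2
      = (t\<^sup>2)\<^sup>2 * (norm (fst p) ^ 4 + norm (snd p) ^ 2)"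
    by (simp add: dil_def power_mult_distrib algebra_simps flip: power_mult)
  then show ?thesis
    unfolding koranyi_sq_def by (simp only: real_sqrt_mult real_sqrt_abs) simp
qed

lemma koranyi_sq_ginv: "koranyi_sq (ginv p) = koranyi_sq p"
  by (simp add: koranyi_sq_def ginv_def)

lemma compact_koranyi_sq_sphere: "compact {p::('m::finite,'n::finite) cpt. koranyi_sq p = 1}"
proof (rule compact_eq_bounded_closed[THEN iffD2], rule conjI)
  have "continuous_on UNIV (koranyi_sq :: ('m,'n) cpt \<Rightarrow> real)"
    unfolding koranyi_sq_def by (intro continuous_intros)
  then show "closed {p::('m,'n) cpt. koranyi_sq p = 1}"
    using continuous_closed_preimage_constant[OF _ closed_UNIV] by fastforce
  show "bounded {p::('m,'n) cpt. koranyi_sq p = 1}"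
  proof (rule boundedI)
    fix p :: "('m,'n) cpt"
    assume "p \<in> {p. koranyi_sq p = 1}"
    then have "norm (fst p) \<le> 1" "norm (snd p) \<le> 1"
      using norm_fst_sq_le_koranyi_sq[of p] norm_snd_le_koranyi_sq[of p]
      by (auto simp: power_le_one_iff abs_le_square_iff[symmetric])
    then show "norm p \<le> 2"
      using norm_Pair_le[of "fst p" "snd p"] by simp
  qed
qed

lemma koranyi_sq_polar:
  assumes "p \<noteq> 0"
  obtains t s where "0 < t" "t\<^sup>2 = koranyi_sq p" "koranyi_sq s = 1" "p = dil t s"
proof -
  define t where "t = sqrt (koranyi_sq p)"
  have t: "0 < t" "t\<^sup>2 = koranyi_sq p"
    using assms koranyi_sq_eq_0_iff[of p] koranyi_sq_nonneg[of p] by (auto simp: t_def)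
  have "koranyi_sq (dil (1 / t) p) = 1"
    using t assms koranyi_sq_eq_0_iff[of p] by (simp add: koranyi_sq_dil power_divide)
  moreover have "p = dil t (dil (1 / t) p)"
    using t(1) by (simp add: dil_def power_divide)
  ultimately show thesis
    by (rule that[OF t])
qed

lemma strongly_homogeneous_norm_nonneg: "strongly_homogeneous_norm nrm \<Longrightarrow> 0 \<le> nrm p"
  unfolding strongly_homogeneous_norm_def by blast

lemma strongly_homogeneous_norm_eq_0_iff: "strongly_homogeneous_norm nrm \<Longrightarrow> nrm p = 0 \<longleftrightarrow> p = 0"
  unfolding strongly_homogeneous_norm_def by blast

lemma strongly_homogeneous_norm_dil: "strongly_homogeneous_norm nrm \<Longrightarrow> nrm (dil t p) = \<bar>t\<bar> * nrm p"
  unfolding strongly_homogeneous_norm_def by blast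

lemma strongly_homogeneous_norm_koranyi_sq_equiv:
  fixes nrm :: "('m::finite,'n::finite) cpt \<Rightarrow> real"
  assumes nrm: "strongly_homogeneous_norm nrm"
  obtains m M where "0 < m" "0 < M"
    "\<And>p. m * koranyi_sq p \<le> nrm p ^ 2" "\<And>p. nrm p ^ 2 \<le> M * koranyi_sq p"
proof -
  note nonneg = strongly_homogeneous_norm_nonneg[OF nrm]
  let ?S = "{p::('m,'n) cpt. koranyi_sq p = 1}"
  have "koranyi_sq (0, axis undefined 1 :: real^'n) = 1"
    by (simp add: koranyi_sq_def)
  then have ne: "?S \<noteq> {}" by blast
  have cont: "continuous_on ?S nrm"
    using nrm continuous_on_subset unfolding strongly_homogeneous_norm_def by blast
  obtain p0 where "p0 \<in> ?S" and min: "\<And>s. s \<in> ?S \<Longrightarrow> nrm p0 \<le> nrm s"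
    using continuous_attains_inf[OF compact_koranyi_sq_sphere ne cont] by blast
  obtain p1 where max: "\<And>s. s \<in> ?S \<Longrightarrow> nrm s \<le> nrm p1"
    using continuous_attains_sup[OF compact_koranyi_sq_sphere ne cont] by blast
  have "0 < nrm p0" "nrm p0 \<le> nrm p1"
    using \<open>p0 \<in> ?S\<close> max nonneg[of p0] strongly_homogeneous_norm_eq_0_iff[OF nrm, of p0]
      koranyi_sq_eq_0_iff[of p0] by auto
  moreover have "nrm p0 ^ 2 * koranyi_sq p \<le> nrm p ^ 2 \<and> nrm p ^ 2 \<le> nrm p1 ^ 2 * koranyi_sq p" for p
  proof (cases "p = 0")
    case True
    then show ?thesis
      using strongly_homogeneous_norm_eq_0_iff[OF nrm, of p] koranyi_sq_eq_0_iff[of p] by simp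
  next
    case False
    then obtain t s where t: "0 < t" "t\<^sup>2 = koranyi_sq p" and "s \<in> ?S" and p_eq: "p = dil t s"
      by (blast elim: koranyi_sq_polar)
    have "nrm p = t * nrm s"
      using p_eq strongly_homogeneous_norm_dil[OF nrm, of t s] t(1) by simp
    then have "nrm p ^ 2 = koranyi_sq p * nrm s ^ 2"
      using t(2) by (simp add: power_mult_distrib)
    moreover have "nrm p0 ^ 2 \<le> nrm s ^ 2" "nrm s ^ 2 \<le> nrm p1 ^ 2"
      using min[OF \<open>s \<in> ?S\<close>] max[OF \<open>s \<in> ?S\<close>] nonneg[of p0] nonneg[of s] by (auto intro: power_mono)
    ultimately show ?thesis
      using koranyi_sq_nonneg[of p] by (simp add: mult.commute mult_left_mono)
  qed
  ultimately show thesis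
    by (intro that[of "nrm p0 ^ 2" "nrm p1 ^ 2"]) auto
qed

lemma strongly_homogeneous_norm_ginv_lower:
  fixes nrm :: "('m::finite,'n::finite) cpt \<Rightarrow> real"
  assumes "strongly_homogeneous_norm nrm"
  obtains c where "0 < c" "\<And>p. c * nrm p \<le> nrm (ginv p)"
proof -
  obtain m M where mM: "0 < m" "0 < M"
    "\<And>p. m * koranyi_sq p \<le> nrm p ^ 2" "\<And>p. nrm p ^ 2 \<le> M * koranyi_sq p"
    using strongly_homogeneous_norm_koranyi_sq_equiv[OF assms] by metis
  note nonneg = strongly_homogeneous_norm_nonneg[OF assms]
  have "(sqrt (m / M) * nrm p)\<^sup>2 \<le> (nrm (ginv p))\<^sup>2" for p
  proof -
    have "(sqrt (m / M) * nrm p)\<^sup>2 = m / M * nrm p ^ 2"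
      using mM(1,2) by (simp add: power_mult_distrib)
    also have "\<dots> \<le> m / M * (M * koranyi_sq p)"
      using mM(1,2,4) by (intro mult_left_mono) auto
    also have "\<dots> \<le> nrm (ginv p) ^ 2"
      using mM(1,2) mM(3)[of "ginv p"] by (simp add: koranyi_sq_ginv)
    finally show ?thesis .
  qed
  then show thesis
    using mM(1,2) nonneg by (intro that[of "sqrt (m / M)"]) (auto intro: power2_le_imp_le)
qed

lemma koranyi_sq_conj_bound:
  fixes B :: "real^'m::finite \<Rightarrow> real^'m \<Rightarrow> real^'n::finite"
  assumes "\<And>x y. norm (B x y) \<le> Cb * norm x * norm y"
  shows "koranyi_sq (- fst h, - snd h + B (fst h) (fst g)) ^ 2
    \<le> 3 * koranyi_sq h ^ 2 + 2 * Cb\<^sup>2 * (koranyi_sq h * koranyi_sq g)"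
proof -
  define x z a t where "x = norm (fst h)" and "z = norm (snd h)" and "a = norm (fst g)"
    and "t = Cb * x * a"
  have "norm (- snd h + B (fst h) (fst g)) \<le> z + t"
    using norm_triangle_ineq[of "- snd h" "B (fst h) (fst g)"] assms[of "fst h" "fst g"]
    by (simp add: x_def z_def a_def t_def)
  then have "norm (- snd h + B (fst h) (fst g)) ^ 2 \<le> (z + t)\<^sup>2"
    by (simp add: power_mono)
  also have "\<dots> \<le> 2 * z\<^sup>2 + 2 * Cb\<^sup>2 * (x\<^sup>2 * a\<^sup>2)"
    using zero_le_power2[of "z - t"] by (simp add: t_def power2_sum power2_diff power_mult_distrib mult_ac)
  also have "\<dots> \<le> 2 * koranyi_sq h ^ 2 + 2 * Cb\<^sup>2 * (koranyi_sq h * koranyi_sq g)"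
    using norm_snd_le_koranyi_sq[of h] norm_fst_sq_le_koranyi_sq[of h] norm_fst_sq_le_koranyi_sq[of g]
      koranyi_sq_nonneg[of h]
    by (intro add_mono mult_left_mono mult_mono power_mono) (auto simp: x_def z_def a_def)
  finally have "norm (- snd h + B (fst h) (fst g)) ^ 2 \<le> \<dots>" .
  moreover have "x ^ 4 \<le> koranyi_sq h ^ 2"
    using power_mono[OF norm_fst_sq_le_koranyi_sq[of h], of 2] by (simp add: x_def flip: power_mult)
  moreover have "koranyi_sq (- fst h, - snd h + B (fst h) (fst g)) ^ 2
      = x ^ 4 + norm (- snd h + B (fst h) (fst g)) ^ 2"
    by (simp add: koranyi_sq_def x_def)
  ultimately show ?thesis
    by linarith
qed

lemma powr_half_exponent_bound:
  fixes w R \<rho> r a c \<beta> e :: real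
  assumes "0 \<le> w" "w\<^sup>2 \<le> a * \<rho> * r" "0 \<le> a" "0 \<le> \<rho>" "0 < r"
    and "0 < c" "c * r \<le> R" "0 \<le> \<beta>" "0 \<le> e"
  shows "w powr \<beta> / R powr e \<le> a powr (\<beta>/2) / c powr e * (\<rho> powr (\<beta>/2) / r powr (e - \<beta>/2))"
proof -
  have "0 \<le> a * \<rho> * r"
    using assms by simp
  have "w powr \<beta> \<le> sqrt (a * \<rho> * r) powr \<beta>"
    using assms by (intro powr_mono2 real_le_rsqrt) auto
  also have "\<dots> = a powr (\<beta>/2) * \<rho> powr (\<beta>/2) * r powr (\<beta>/2)"
    using assms \<open>0 \<le> a * \<rho> * r\<close> by (simp add: powr_mult powr_powr flip: powr_half_sqrt)
  finally have num: "w powr \<beta> \<le> a powr (\<beta>/2) * \<rho> powr (\<beta>/2) * r powr (\<beta>/2)" .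
  have "c powr e * r powr e \<le> R powr e"
    using assms powr_mono2[of e "c * r" R] by (simp add: powr_mult)
  then have "w powr \<beta> / R powr e \<le> (a powr (\<beta>/2) * \<rho> powr (\<beta>/2) * r powr (\<beta>/2)) / (c powr e * r powr e)"
    using num assms by (intro frac_le) auto
  also have "\<dots> = a powr (\<beta>/2) / c powr e * (\<rho> powr (\<beta>/2) / r powr (e - \<beta>/2))"
    using assms by (simp add: powr_add[of r "\<beta>/2" "e - \<beta>/2", simplified])
  finally show ?thesis .
qed

definition CZ_smooth ::
    "(real^'m::finite \<Rightarrow> real^'m \<Rightarrow> real^'n::finite) \<Rightarrow> (('m,'n) cpt \<Rightarrow> real) \<Rightarrow> real
      \<Rightarrow> real \<Rightarrow> real \<Rightarrow> real \<Rightarrow> (('m,'n) cpt \<Rightarrow> real^'d::finite) \<Rightarrow> bool" where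
  "CZ_smooth B nrm Q \<kappa> \<beta> CK K \<longleftrightarrow>
     (\<forall>p1 p2. p1 \<noteq> 0 \<and> p2 \<noteq> 0 \<and> cdist B nrm p1 p2 \<le> \<kappa> * nrm p1 \<longrightarrow>
        norm (K p1 - K p2) \<le> CK * nrm (gmul B (ginv p2) p1) powr \<beta> / nrm p1 powr (Q - 1 + \<beta>))"

lemma CZ_kernelE:
  assumes "CZ_kernel B nrm Q \<kappa> \<beta> K"
  obtains CK where "0 < \<kappa>" "\<kappa> < 1" "0 < \<beta>" "\<beta> \<le> 1" "1 \<le> CK" "CZ_smooth B nrm Q \<kappa> \<beta> CK K"
  using assms unfolding CZ_kernel_def CZ_smooth_def by blast

lemma CZ_smooth_half_exponent:
  assumes "CZ_smooth B nrm Q \<kappa> \<beta> CK K" "0 \<le> CK" "0 \<le> \<beta>" "0 \<le> Q - 1 + \<beta>"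
    and "X \<noteq> 0" "Y \<noteq> 0" "cdist B nrm X Y \<le> \<kappa> * nrm X"
    and "0 \<le> cdist B nrm X Y" "(cdist B nrm X Y)\<^sup>2 \<le> a * \<rho> * r" "0 \<le> a" "0 \<le> \<rho>" "0 < r"
    and "0 < c" "c * r \<le> nrm X"
  shows "norm (K X - K Y) \<le> CK * (a powr (\<beta>/2) / c powr (Q - 1 + \<beta>)) * (\<rho> powr (\<beta>/2) / r powr (Q - 1 + \<beta>/2))"
proof -
  have "norm (K X - K Y) \<le> CK * cdist B nrm X Y powr \<beta> / nrm X powr (Q - 1 + \<beta>)"
    using assms(1,5-7) unfolding CZ_smooth_def cdist_def by blast
  also have "\<dots> = CK * (cdist B nrm X Y powr \<beta> / nrm X powr (Q - 1 + \<beta>))"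
    by simp
  also have "\<dots> \<le> CK * (a powr (\<beta>/2) / c powr (Q - 1 + \<beta>) * (\<rho> powr (\<beta>/2) / r powr (Q - 1 + \<beta> - \<beta>/2)))"
    using assms(2-4,8-) by (intro mult_left_mono powr_half_exponent_bound) auto
  finally show ?thesis
    by (simp add: mult.assoc add_ac)
qed

locale skew_bilinear =
  fixes B :: "real^'m::finite \<Rightarrow> real^'m \<Rightarrow> real^'n::finite"
  assumes bilinear: "bilinear B"
    and skew: "B x y = - B y x"
begin

lemma self_eq_0: "B x x = 0"
  using skew[of x x] by (metis add.right_inverse scaleR_2 scaleR_eq_0_iff zero_neq_numeral)

lemma gmul_assoc: "gmul B (gmul B p q) r = gmul B p (gmul B q r)"
  using bilinear by (simp add: gmul_def bilinear_ladd bilinear_radd algebra_simps)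

lemma gmul_0_left [simp]: "gmul B 0 p = p"
  using bilinear by (simp add: gmul_def bilinear_lzero)

lemma gmul_0_right [simp]: "gmul B p 0 = p"
  using bilinear by (simp add: gmul_def bilinear_rzero)

lemma gmul_ginv_left [simp]: "gmul B (ginv p) p = 0"
  using bilinear by (simp add: gmul_def ginv_def bilinear_lneg self_eq_0 zero_prod_def)

lemma gmul_ginv_right [simp]: "gmul B p (ginv p) = 0"
  using bilinear by (simp add: gmul_def ginv_def bilinear_rneg self_eq_0 zero_prod_def)

lemma ginv_ginv [simp]: "ginv (ginv p) = p"
  by (simp add: ginv_def)

lemma ginv_gmul: "ginv (gmul B p q) = gmul B (ginv q) (ginv p)"
  using bilinear skew[of "fst q" "fst p"]
  by (simp add: gmul_def ginv_def bilinear_lneg bilinear_rneg)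

lemma gmul_ginv_cancel_left [simp]: "gmul B (ginv p) (gmul B p q) = q"
  by (simp flip: gmul_assoc)

lemma gmul_cancel_ginv_left [simp]: "gmul B p (gmul B (ginv p) q) = q"
  by (simp flip: gmul_assoc)

lemma gmul_ginv_eq_0_iff: "gmul B (ginv q) p = 0 \<longleftrightarrow> p = q"
  by (metis gmul_cancel_ginv_left gmul_0_right gmul_ginv_left)

lemma gmul_conj_ginv: "gmul B (gmul B g (ginv h)) (ginv g) = (- fst h, - snd h + B (fst h) (fst g))"
  using bilinear skew[of "fst g" "fst h"] self_eq_0
  by (simp add: gmul_def ginv_def bilinear_lsub bilinear_lneg bilinear_rneg algebra_simps)

lemma cdist_left_translate: "cdist B nrm (gmul B g p1) (gmul B g p2) = cdist B nrm p1 p2"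
  by (simp add: cdist_def ginv_gmul gmul_assoc)

lemma conj_ginv_norm_bound:
  fixes nrm :: "('m, 'n) cpt \<Rightarrow> real"
  assumes "strongly_homogeneous_norm nrm"
  obtains A where "0 < A"
    "\<And>g h. nrm h \<le> nrm g \<Longrightarrow> nrm (gmul B (gmul B g (ginv h)) (ginv g)) ^ 2 \<le> A * nrm h * nrm g"
proof -
  obtain m M where "0 < m" "0 < M"
    and lower: "\<And>p. m * koranyi_sq p \<le> nrm p ^ 2" and upper: "\<And>p. nrm p ^ 2 \<le> M * koranyi_sq p"
    using strongly_homogeneous_norm_koranyi_sq_equiv[OF assms] by metis
  obtain Cb where "0 < Cb" and Cb: "\<And>x y. norm (B x y) \<le> Cb * norm x * norm y"
    using bilinear_bounded_pos[OF bilinear] by blast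
  note nonneg = strongly_homogeneous_norm_nonneg[OF assms]
  define c2 where "c2 = 3 * (M / m) + 2 * Cb\<^sup>2"
  have "0 < c2"
    using \<open>0 < m\<close> \<open>0 < M\<close> by (simp add: c2_def add_pos_nonneg)
  show thesis
  proof (rule that[of "M * sqrt c2 / m"])
    fix g h :: "('m, 'n) cpt"
    assume "nrm h \<le> nrm g"
    let ?W = "gmul B (gmul B g (ginv h)) (ginv g)"
    have kh: "koranyi_sq h \<le> nrm h ^ 2 / m" and kg: "koranyi_sq g \<le> nrm g ^ 2 / m"
      using lower \<open>0 < m\<close> by (simp_all add: field_simps mult.commute)
    have "m * koranyi_sq h \<le> M * koranyi_sq g"
      using lower[of h] upper[of g] power_mono[OF \<open>nrm h \<le> nrm g\<close> nonneg[of h], of 2] by linarith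
    then have "koranyi_sq h * (m * koranyi_sq h) \<le> koranyi_sq h * (M * koranyi_sq g)"
      using koranyi_sq_nonneg by (rule mult_left_mono)
    then have hg: "koranyi_sq h ^ 2 \<le> M / m * (koranyi_sq h * koranyi_sq g)"
      using \<open>0 < m\<close> by (simp add: field_simps power2_eq_square mult_ac)
    have "koranyi_sq ?W ^ 2 \<le> 3 * koranyi_sq h ^ 2 + 2 * Cb\<^sup>2 * (koranyi_sq h * koranyi_sq g)"
      using koranyi_sq_conj_bound[OF Cb] by (simp add: gmul_conj_ginv)
    also have "\<dots> \<le> c2 * (koranyi_sq h * koranyi_sq g)"
      using hg by (simp add: c2_def distrib_right mult.assoc)
    also have "\<dots> \<le> c2 * (nrm h ^ 2 / m * (nrm g ^ 2 / m))"
      using \<open>0 < c2\<close> \<open>0 < m\<close>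
      by (intro mult_left_mono mult_mono kh kg koranyi_sq_nonneg) simp_all
    also have "\<dots> = (sqrt c2 * nrm h * nrm g / m)\<^sup>2"
      using \<open>0 < c2\<close> by (simp add: power_mult_distrib power_divide power2_eq_square)
    finally have "koranyi_sq ?W \<le> sqrt c2 * nrm h * nrm g / m"
      by (rule power2_le_imp_le) (use \<open>0 < m\<close> \<open>0 < c2\<close> nonneg[of h] nonneg[of g] in simp)
    then have "M * koranyi_sq ?W \<le> M * (sqrt c2 * nrm h * nrm g / m)"
      using \<open>0 < M\<close> by (rule mult_left_mono[OF _ less_imp_le])
    then show "nrm ?W ^ 2 \<le> M * sqrt c2 / m * nrm h * nrm g"
      using upper[of ?W] by simp
  qed (use \<open>0 < m\<close> \<open>0 < M\<close> \<open>0 < c2\<close> in simp)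
qed

lemma left_kernel_difference_bound:
  assumes nrm: "strongly_homogeneous_norm nrm"
    and K: "CZ_smooth B nrm Q \<kappa> \<beta> CK K" "0 \<le> CK" "0 \<le> \<beta>" "0 \<le> Q - 1 + \<beta>"
    and "p1 \<noteq> q" "p2 \<noteq> q"
    and close: "cdist B nrm p1 p2 \<le> \<kappa> * cdist B nrm p1 q" "cdist B nrm p1 p2 \<le> cdist B nrm p1 q"
  shows "norm (K (gmul B (ginv q) p1) - K (gmul B (ginv q) p2))
    \<le> CK * (cdist B nrm p1 p2 powr (\<beta>/2) / cdist B nrm p1 q powr (Q - 1 + \<beta>/2))"
proof -
  note nonneg = strongly_homogeneous_norm_nonneg[OF nrm]
  have "0 < cdist B nrm p1 q"
    using \<open>p1 \<noteq> q\<close> nonneg strongly_homogeneous_norm_eq_0_iff[OF nrm]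
    by (simp add: cdist_def gmul_ginv_eq_0_iff less_le)
  moreover have "(cdist B nrm p1 p2)\<^sup>2 \<le> 1 * cdist B nrm p1 p2 * cdist B nrm p1 q"
    using close(2) nonneg by (simp add: cdist_def power2_eq_square mult_left_mono)
  ultimately show ?thesis
    using CZ_smooth_half_exponent[OF K, of "gmul B (ginv q) p1" "gmul B (ginv q) p2" 1
        "cdist B nrm p1 p2" "cdist B nrm p1 q" 1]
      close(1) \<open>p1 \<noteq> q\<close> \<open>p2 \<noteq> q\<close> nonneg
    by (simp add: cdist_left_translate gmul_ginv_eq_0_iff) (simp add: cdist_def)
qed

lemma right_kernel_difference_bound:
  assumes nrm: "strongly_homogeneous_norm nrm"
    and K: "CZ_smooth B nrm Q \<kappa> \<beta> CK K" "0 \<le> CK" "0 \<le> \<beta>" "0 \<le> Q - 1 + \<beta>" "0 \<le> \<kappa>"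
    and conj: "\<And>g h. nrm h \<le> nrm g \<Longrightarrow> nrm (gmul B (gmul B g (ginv h)) (ginv g)) ^ 2 \<le> A * nrm h * nrm g"
      "0 \<le> A"
    and inv: "\<And>p. c * nrm p \<le> nrm (ginv p)" "0 < c"
    and C: "1 \<le> C" "A \<le> (\<kappa> * c)\<^sup>2 * C"
    and "p1 \<noteq> q" "p2 \<noteq> q" and close: "C * cdist B nrm p1 p2 \<le> cdist B nrm p1 q"
  shows "norm (K (gmul B (ginv p1) q) - K (gmul B (ginv p2) q))
    \<le> CK * (A powr (\<beta>/2) / c powr (Q - 1 + \<beta>))
        * (cdist B nrm p1 p2 powr (\<beta>/2) / cdist B nrm p1 q powr (Q - 1 + \<beta>/2))"
proof -
  define P u R1 R2 where "P = gmul B (ginv q) p1" and "u = gmul B (ginv p2) p1"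
    and "R1 = gmul B (ginv p1) q" and "R2 = gmul B (ginv p2) q"
  define r \<rho> w where "r = nrm P" and "\<rho> = nrm u" and "w = cdist B nrm R1 R2"
  note nonneg = strongly_homogeneous_norm_nonneg[OF nrm]
  have "R1 \<noteq> 0" "R2 \<noteq> 0" "0 \<le> \<rho>" "0 \<le> w"
    using \<open>p1 \<noteq> q\<close> \<open>p2 \<noteq> q\<close> nonneg by (auto simp: R1_def R2_def \<rho>_def w_def cdist_def gmul_ginv_eq_0_iff)
  have "0 < r"
    using \<open>p1 \<noteq> q\<close> nonneg strongly_homogeneous_norm_eq_0_iff[OF nrm]
    by (simp add: r_def P_def gmul_ginv_eq_0_iff less_le)
  have C_\<rho>: "C * \<rho> \<le> r"
    using close by (simp add: \<rho>_def r_def u_def P_def cdist_def)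
  then have "\<rho> \<le> r"
    using mult_right_mono[OF C(1) \<open>0 \<le> \<rho>\<close>] by simp
  have "gmul B (ginv R2) R1 = gmul B (gmul B P (ginv u)) (ginv P)"
    by (simp add: R1_def R2_def P_def u_def ginv_gmul gmul_assoc)
  then have w_sq: "w\<^sup>2 \<le> A * \<rho> * r"
    using conj(1)[of u P] \<open>\<rho> \<le> r\<close> by (simp add: w_def \<rho>_def r_def cdist_def)
  have R1_lower: "c * r \<le> nrm R1"
    using inv(1)[of P] by (simp add: r_def P_def R1_def ginv_gmul)
  have "C * w\<^sup>2 \<le> A * (C * \<rho>) * r"
    using w_sq C(1) by (simp add: mult_left_mono mult_ac)
  also have "\<dots> \<le> A * r * r"
    using C_\<rho> conj(2) \<open>0 < r\<close> by (simp add: mult_right_mono mult_left_mono)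
  also have "\<dots> \<le> C * (\<kappa> * c * r)\<^sup>2"
    using C(2) \<open>0 < r\<close> by (simp add: power_mult_distrib mult_right_mono mult_ac power2_eq_square)
  finally have "w\<^sup>2 \<le> (\<kappa> * (c * r))\<^sup>2"
    using C(1) by (simp add: mult_ac)
  then have "w \<le> \<kappa> * nrm R1"
    using R1_lower K(5) inv(2) \<open>0 < r\<close>
    by (meson mult_left_mono order_trans power2_le_imp_le mult_nonneg_nonneg less_imp_le)
  then show ?thesis
    using CZ_smooth_half_exponent[OF K(1-4) \<open>R1 \<noteq> 0\<close> \<open>R2 \<noteq> 0\<close> _ \<open>0 \<le> w\<close>[unfolded w_def]
        w_sq[unfolded w_def] conj(2) \<open>0 \<le> \<rho>\<close> \<open>0 < r\<close> inv(2) R1_lower]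
    by (simp add: w_def \<rho>_def r_def R1_def R2_def u_def P_def cdist_def)
qed

lemma kernel_difference_sum_bound:
  assumes nrm: "strongly_homogeneous_norm nrm"
    and K: "CZ_smooth B nrm Q \<kappa> \<beta> CK K" "0 \<le> CK" "0 \<le> \<beta>" "0 \<le> Q - 1 + \<beta>" "0 \<le> \<kappa>"
    and conj: "\<And>g h. nrm h \<le> nrm g \<Longrightarrow> nrm (gmul B (gmul B g (ginv h)) (ginv g)) ^ 2 \<le> A * nrm h * nrm g"
      "0 \<le> A"
    and inv: "\<And>p. c * nrm p \<le> nrm (ginv p)" "0 < c"
    and C: "1 \<le> C" "1 \<le> \<kappa> * C" "A \<le> (\<kappa> * c)\<^sup>2 * C"
    and pts: "p1 \<noteq> q" "p2 \<noteq> q" "cdist B nrm p1 p2 \<le> cdist B nrm p1 q / C"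
  shows "norm (K (gmul B (ginv q) p1) - K (gmul B (ginv q) p2))
      + norm (K (gmul B (ginv p1) q) - K (gmul B (ginv p2) q))
    \<le> (CK + CK * (A powr (\<beta>/2) / c powr (Q - 1 + \<beta>)))
      * nrm (gmul B (ginv p2) p1) powr (\<beta>/2) / nrm (gmul B (ginv q) p1) powr (Q - 1 + \<beta>/2)"
proof -
  have "0 \<le> cdist B nrm p1 p2"
    using nrm by (simp add: cdist_def strongly_homogeneous_norm_nonneg)
  have close: "C * cdist B nrm p1 p2 \<le> cdist B nrm p1 q"
    using pts(3) C(1) by (simp add: field_simps)
  have "cdist B nrm p1 p2 \<le> \<kappa> * C * cdist B nrm p1 p2"
    using mult_right_mono[OF C(2) \<open>0 \<le> cdist B nrm p1 p2\<close>] by simp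
  also have "\<dots> \<le> \<kappa> * cdist B nrm p1 q"
    using close K(5) by (simp add: mult.assoc mult_left_mono)
  finally have "cdist B nrm p1 p2 \<le> \<kappa> * cdist B nrm p1 q" .
  moreover have "cdist B nrm p1 p2 \<le> cdist B nrm p1 q"
    using close mult_right_mono[OF C(1) \<open>0 \<le> cdist B nrm p1 p2\<close>] by simp
  ultimately have "norm (K (gmul B (ginv q) p1) - K (gmul B (ginv q) p2))
        + norm (K (gmul B (ginv p1) q) - K (gmul B (ginv p2) q))
      \<le> CK * (cdist B nrm p1 p2 powr (\<beta>/2) / cdist B nrm p1 q powr (Q - 1 + \<beta>/2))
        + CK * (A powr (\<beta>/2) / c powr (Q - 1 + \<beta>))
          * (cdist B nrm p1 p2 powr (\<beta>/2) / cdist B nrm p1 q powr (Q - 1 + \<beta>/2))"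
    by (intro add_mono left_kernel_difference_bound[OF nrm K(1-4) pts(1,2)]
        right_kernel_difference_bound[OF nrm K conj inv C(1,3) pts(1,2) close])
  then show ?thesis
    by (simp only: cdist_def distrib_right add_divide_distrib times_divide_eq_right)
qed

end

theorem lemma2p16:
  fixes B :: "real^'m \<Rightarrow> real^'m \<Rightarrow> real^'n"
    and nrm :: "('m,'n) cpt \<Rightarrow> real"
    and K :: "('m,'n) cpt \<Rightarrow> real^'d"
    and \<kappa> \<beta> :: real
  assumes "step2_bracket B"
    and "strongly_homogeneous_norm nrm"
    and "CZ_kernel B nrm (hdim TYPE(('m,'n) cpt)) \<kappa> \<beta> K"
  shows "\<exists>C\<ge>1. \<exists>A. \<forall>q p1 p2. p1 \<noteq> q \<and> p2 \<noteq> q \<and> cdist B nrm p1 p2 \<le> cdist B nrm p1 q / C \<longrightarrow>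
           norm (K (gmul B (ginv q) p1) - K (gmul B (ginv q) p2))
             + norm (K (gmul B (ginv p1) q) - K (gmul B (ginv p2) q))
           \<le> A * nrm (gmul B (ginv p2) p1) powr (\<beta>/2)
               / nrm (gmul B (ginv q) p1) powr (hdim TYPE(('m,'n) cpt) - 1 + \<beta>/2)"
proof -
  interpret skew_bilinear B
    using assms(1) unfolding step2_bracket_def by unfold_locales blast+
  define Q where "Q = hdim TYPE(('m,'n) cpt)"
  have "1 \<le> Q"
    using zero_less_card_finite[where 'a = 'm] by (simp add: Q_def hdim_def add_increasing2 Suc_le_eq)
  obtain CK where "0 < \<kappa>" "0 < \<beta>" "1 \<le> CK"
    and smooth: "CZ_smooth B nrm Q \<kappa> \<beta> CK K"
    using CZ_kernelE[OF assms(3)[folded Q_def]] by metis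
  obtain A where "0 < A" and conj: "\<And>g h. nrm h \<le> nrm g \<Longrightarrow>
      nrm (gmul B (gmul B g (ginv h)) (ginv g)) ^ 2 \<le> A * nrm h * nrm g"
    using conj_ginv_norm_bound[OF assms(2)] by metis
  obtain c where "0 < c" and inv: "\<And>p. c * nrm p \<le> nrm (ginv p)"
    using strongly_homogeneous_norm_ginv_lower[OF assms(2)] by metis
  define C where "C = max 1 (max (1 / \<kappa>) (A / (\<kappa> * c)\<^sup>2))"
  have "1 \<le> C" "1 / \<kappa> \<le> C" "A / (\<kappa> * c)\<^sup>2 \<le> C"
    by (simp_all add: C_def)
  then have C: "1 \<le> C" "1 \<le> \<kappa> * C" "A \<le> (\<kappa> * c)\<^sup>2 * C"
    using \<open>0 < \<kappa>\<close> \<open>0 < c\<close> by (simp_all add: pos_divide_le_eq mult.commute)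
  have "0 \<le> CK" "0 \<le> \<beta>" "0 \<le> Q - 1 + \<beta>" "0 \<le> \<kappa>" "0 \<le> A"
    using \<open>0 < \<kappa>\<close> \<open>0 < \<beta>\<close> \<open>1 \<le> CK\<close> \<open>1 \<le> Q\<close> \<open>0 < A\<close> by simp_all
  from kernel_difference_sum_bound[OF assms(2) smooth this(1-4) conj this(5) inv \<open>0 < c\<close> C]
  show ?thesis
    unfolding Q_def using C(1) by blast
qed

end
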